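(* Let $\tau,K\ge1$ and $C\ge1$. Let $\lambda_i,\lambda_j,\lambda_k,\lambda_\ell\in\mathbb{H}$ with $\lambda_i\neq\lambda_j$, $\lambda_k\neq\lambda_\ell$ and $\{\lambda_i,\lambda_j\}\neq\{\lambda_k,\lambda_\ell\}$, and let $A_i,A_j,A_k,A_\ell\subset\mathbb{H}$ be finite sets such that each $X\in\{A_i,A_j,A_k,A_\ell\}$ satisfies $|X|\le C\tau$ and $E^+(X)\le C\tau^3/K$. Then \[ \big|\big((A_i+A_j)\times(A_i\lambda_i+A_j\lambda_j)\big)\cap\big((A_k+A_\ell)\times(A_k\lambda_k+A_\ell\lambda_\ell)\big)\big| \ll C\,\tau^2K^{-1/2}, \] where $(X+Y)\times(X\lambda+Y\mu)$ denotes the set of points $\{(a+b,\ a\lambda+b\mu): a\in X, b\in Y\}\subset\mathbb{H}^2$.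
   Context: $\mathbb{H}$ denotes the quaternions. For finite $X\subset\mathbb{H}$, $E^+(X)=|\{(a,b,c,d)\in X^4: a-b=c-d\}|$ is the additive energy. $X\lambda=\{x\lambda:x\in X\}$. $\ll$ hides an absolute constant. *)

theory Defs
  imports Complex_Main
begin

datatype quat = Quat (Re: real) (Im1: real) (Im2: real) (Im3: real)

lemma quat_eqI [intro?]:
  "\<lbrakk>Re x = Re y; Im1 x = Im1 y; Im2 x = Im2 y; Im3 x = Im3 y\<rbrakk> \<Longrightarrow> x = y"
  by (cases x, cases y) simp

instantiation quat :: ring_1
begin

definition "0 = Quat 0 0 0 0"
definition "1 = Quat 1 0 0 0"
definition "x + y = Quat (Re x + Re y) (Im1 x + Im1 y) (Im2 x + Im2 y) (Im3 x + Im3 y)"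
definition "- x = Quat (- Re x) (- Im1 x) (- Im2 x) (- Im3 x)"
definition "x - y = Quat (Re x - Re y) (Im1 x - Im1 y) (Im2 x - Im2 y) (Im3 x - Im3 y)"
definition "x * y = Quat
   (Re x * Re y - Im1 x * Im1 y - Im2 x * Im2 y - Im3 x * Im3 y)
   (Re x * Im1 y + Im1 x * Re y + Im2 x * Im3 y - Im3 x * Im2 y)
   (Re x * Im2 y - Im1 x * Im3 y + Im2 x * Re y + Im3 x * Im1 y)
   (Re x * Im3 y + Im1 x * Im2 y - Im2 x * Im1 y + Im3 x * Re y)"

instance
  by standard
     (auto intro!: quat_eqI simp: zero_quat_def one_quat_def plus_quat_def
        uminus_quat_def minus_quat_def times_quat_def algebra_simps)

end

definition additive_energy :: "quat set \<Rightarrow> nat" where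
  "additive_energy X =
     card {(a, b, c, d). a \<in> X \<and> b \<in> X \<and> c \<in> X \<and> d \<in> X \<and> a - b = c - d}"

definition twisted_sumset :: "quat set \<Rightarrow> quat set \<Rightarrow> quat \<Rightarrow> quat \<Rightarrow> (quat \<times> quat) set" where
  "twisted_sumset X Y l m = {(a + b, a * l + b * m) | a b. a \<in> X \<and> b \<in> Y}"

end

theory Submission
  imports Defs "HOL-Analysis.Convex"
begin

text \<open>
  A common point of the two twisted sumsets comes from \<open>a + b = c + d\<close> and
  \<open>a li + b lj = c lk + d ll\<close>; eliminating \<open>b\<close> gives
  \<open>c (lk - lj) + d (ll - lj) = a (li - lj)\<close>, and the point is determined by \<open>(c, d)\<close>.
  After exchanging \<open>i\<close> and \<open>j\<close> if necessary, all three differences are nonzero, so the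
  intersection is at most the number of pairs \<open>(x, y) \<in> X \<times> Y\<close> with \<open>x + y \<in> Z\<close>, where
  \<open>X, Y, Z\<close> are right dilates of \<open>Ak, Al, Ai\<close>; as quaternions have no zero divisors,
  dilation preserves sizes and energies. By Cauchy-Schwarz this number is at most
  \<open>sqrt (|Y| E(X, Z))\<close>, and by Cauchy-Schwarz again \<open>E(X, Z)\<^sup>2 \<le> E(X) E(Z)\<close>, giving
  \<open>sqrt (C\<tau> \<cdot> C\<tau>\<^sup>3 / K) = C\<tau>\<^sup>2 / sqrt K\<close>.
\<close>

definition quat_norm_sq :: "quat \<Rightarrow> real" where
  "quat_norm_sq q = Re q ^ 2 + Im1 q ^ 2 + Im2 q ^ 2 + Im3 q ^ 2"

lemma quat_norm_sq_mult: "quat_norm_sq (p * q) = quat_norm_sq p * quat_norm_sq q"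
  unfolding quat_norm_sq_def times_quat_def by (simp add: power2_eq_square algebra_simps)

lemma quat_norm_sq_eq_0_iff: "quat_norm_sq q = 0 \<longleftrightarrow> q = 0"
  by (cases q) (simp add: quat_norm_sq_def zero_quat_def add_nonneg_eq_0_iff)

instance quat :: ring_1_no_zero_divisors
  by standard (metis quat_norm_sq_mult quat_norm_sq_eq_0_iff mult_eq_0_iff)

text \<open>The mixed energy \<open>E(X, Z)\<close>; stated for any abelian group because \<open>additive_energy\<close> is fixed to quaternions.\<close>
definition mixed_energy :: "'a::ab_group_add set \<Rightarrow> 'a set \<Rightarrow> nat" where
  "mixed_energy X Z = card {((a, b), (c, d)). a \<in> X \<and> b \<in> X \<and> c \<in> Z \<and> d \<in> Z \<and> a - b = c - d}"

definition diff_rep :: "'a::ab_group_add set \<Rightarrow> 'a \<Rightarrow> nat" where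
  "diff_rep X d = card {(a, b). a \<in> X \<and> b \<in> X \<and> a - b = d}"

lemma additive_energy_eq_mixed_energy: "additive_energy X = mixed_energy X X"
  unfolding additive_energy_def mixed_energy_def
  by (rule bij_betw_same_card[of "\<lambda>(a, b, c, d). ((a, b), (c, d))"])
     (auto simp: bij_betw_def inj_on_def image_def)

lemma card_matching_pairs_eq_sum:
  assumes "finite U" "finite V" "finite D" "f ` U \<subseteq> D"
  shows "card {(u, v). u \<in> U \<and> v \<in> V \<and> f u = g v}
       = (\<Sum>d\<in>D. card {u \<in> U. f u = d} * card {v \<in> V. g v = d})"
proof -
  have "{(u, v). u \<in> U \<and> v \<in> V \<and> f u = g v} = (\<Union>d\<in>D. {u \<in> U. f u = d} \<times> {v \<in> V. g v = d})"
    using assms(4) by auto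
  also have "card \<dots> = (\<Sum>d\<in>D. card ({u \<in> U. f u = d} \<times> {v \<in> V. g v = d}))"
    using assms(1-3) by (intro card_UN_disjoint) auto
  finally show ?thesis by (simp add: card_cartesian_product)
qed

lemma mixed_energy_eq_sum_diff_rep:
  fixes X Z :: "'a::ab_group_add set"
  assumes "finite X" "finite Z" "finite D" "\<forall>a\<in>X. \<forall>b\<in>X. a - b \<in> D"
  shows "mixed_energy X Z = (\<Sum>d\<in>D. diff_rep X d * diff_rep Z d)"
proof -
  have "mixed_energy X Z
      = card {(u, v). u \<in> X \<times> X \<and> v \<in> Z \<times> Z \<and> (\<lambda>(a, b). a - b) u = (\<lambda>(c, d). c - d) v}"
    unfolding mixed_energy_def by (rule arg_cong[where f=card]) auto
  also have "\<dots> = (\<Sum>d\<in>D. card {u \<in> X \<times> X. (\<lambda>(a, b). a - b) u = d} * card {v \<in> Z \<times> Z. (\<lambda>(c, e). c - e) v = d})"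
    using assms by (intro card_matching_pairs_eq_sum) auto
  also have "\<dots> = (\<Sum>d\<in>D. diff_rep X d * diff_rep Z d)"
    unfolding diff_rep_def by (intro sum.cong refl arg_cong2[where f="(*)"] arg_cong[where f=card]) auto
  finally show ?thesis .
qed

lemma mixed_energy_squared_le:
  fixes X Z :: "'a::ab_group_add set"
  assumes "finite X" "finite Z"
  shows "mixed_energy X Z ^ 2 \<le> mixed_energy X X * mixed_energy Z Z"
proof -
  define D where "D = (\<lambda>(a, b). a - b) ` (X \<times> X) \<union> (\<lambda>(a, b). a - b) ` (Z \<times> Z)"
  have D: "finite D" "\<forall>a\<in>X. \<forall>b\<in>X. a - b \<in> D" "\<forall>a\<in>Z. \<forall>b\<in>Z. a - b \<in> D"
    unfolding D_def using assms by auto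
  have "real (mixed_energy X Z) ^ 2 \<le> real (mixed_energy X X) * real (mixed_energy Z Z)"
    using Cauchy_Schwarz_ineq_sum[of "\<lambda>d. real (diff_rep X d)" "\<lambda>d. real (diff_rep Z d)" D]
    unfolding mixed_energy_eq_sum_diff_rep[OF assms D(1,2)] mixed_energy_eq_sum_diff_rep[OF assms(2,2) D(1,3)]
      mixed_energy_eq_sum_diff_rep[OF assms(1,1) D(1,2)]
    by (simp add: power2_eq_square)
  then show ?thesis by (simp flip: of_nat_power of_nat_mult)
qed

lemma card_sum_incidences_squared_le:
  fixes X Y Z :: "'a::ab_group_add set"
  assumes "finite X" "finite Y" "finite Z"
  shows "card {(x, y). x \<in> X \<and> y \<in> Y \<and> x + y \<in> Z} ^ 2 \<le> card Y * mixed_energy X Z"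
proof -
  define S where "S y = {x \<in> X. x + y \<in> Z}" for y
  have fin_S: "finite (S y)" for y
    unfolding S_def using assms by simp
  have "{(x, y). x \<in> X \<and> y \<in> Y \<and> x + y \<in> Z} = prod.swap ` Sigma Y S"
    unfolding S_def by force
  then have incidences: "card {(x, y). x \<in> X \<and> y \<in> Y \<and> x + y \<in> Z} = (\<Sum>y\<in>Y. card (S y))"
    using assms fin_S by (simp add: card_image)
  have "(\<Sum>y\<in>Y. card (S y) ^ 2) = card (Sigma Y (\<lambda>y. S y \<times> S y))"
    using assms fin_S by (simp add: card_cartesian_product power2_eq_square)
  also have "\<dots> \<le> mixed_energy X Z"
    unfolding mixed_energy_def
  proof (rule card_inj_on_le[of "\<lambda>(y, x, x'). ((x, x'), (x + y, x' + y))"])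
    show "inj_on (\<lambda>(y, x, x'). ((x, x'), (x + y, x' + y))) (Sigma Y (\<lambda>y. S y \<times> S y))"
      by (rule inj_onI) auto
    show "(\<lambda>(y, x, x'). ((x, x'), (x + y, x' + y))) ` (Sigma Y (\<lambda>y. S y \<times> S y))
        \<subseteq> {((a, b), (c, d)). a \<in> X \<and> b \<in> X \<and> c \<in> Z \<and> d \<in> Z \<and> a - b = c - d}"
      unfolding S_def by auto
    show "finite {((a, b), (c, d)). a \<in> X \<and> b \<in> X \<and> c \<in> Z \<and> d \<in> Z \<and> a - b = c - d}"
      by (rule finite_subset[of _ "(X \<times> X) \<times> (Z \<times> Z)"]) (use assms in auto)
  qed
  finally have squares: "(\<Sum>y\<in>Y. card (S y) ^ 2) \<le> mixed_energy X Z" .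
  have "real ((\<Sum>y\<in>Y. card (S y)) ^ 2) \<le> real ((\<Sum>y\<in>Y. card (S y) ^ 2) * card Y)"
    using sum_squared_le_sum_of_squares[of "\<lambda>y. real (card (S y))" Y] by simp
  then have "(\<Sum>y\<in>Y. card (S y)) ^ 2 \<le> (\<Sum>y\<in>Y. card (S y) ^ 2) * card Y"
    by (simp only: of_nat_le_iff)
  also have "\<dots> \<le> card Y * mixed_energy X Z"
    using squares by (simp add: mult.commute)
  finally show ?thesis
    unfolding incidences .
qed

lemma mixed_energy_mult_right:
  fixes X Z :: "'a::ring_no_zero_divisors set"
  assumes "p \<noteq> 0"
  shows "mixed_energy ((\<lambda>x. x * p) ` X) ((\<lambda>x. x * p) ` Z) = mixed_energy X Z"
proof -
  define f where "f = (\<lambda>((a, b), (c, d)). ((a * p, b * p), (c * p, d * p)))"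
  define E where "E X Z = {((a, b), (c, d)). a \<in> X \<and> b \<in> X \<and> c \<in> Z \<and> d \<in> Z \<and> a - b = c - d}"
    for X Z :: "'a set"
  have dilate_diff: "a * p - b * p = c * p - d * p \<longleftrightarrow> a - b = c - d" for a b c d :: 'a
    using assms by (simp flip: left_diff_distrib)
  have "E ((\<lambda>x. x * p) ` X) ((\<lambda>x. x * p) ` Z) = f ` E X Z"
  proof (intro equalityI subsetI)
    fix q assume "q \<in> E ((\<lambda>x. x * p) ` X) ((\<lambda>x. x * p) ` Z)"
    then obtain a b c d where "a \<in> X" "b \<in> X" "c \<in> Z" "d \<in> Z"
      and "q = ((a * p, b * p), (c * p, d * p))" "a * p - b * p = c * p - d * p"
      unfolding E_def by blast
    then show "q \<in> f ` E X Z"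
      unfolding E_def f_def dilate_diff by (intro image_eqI[of _ _ "((a, b), (c, d))"]) auto
  next
    fix q assume "q \<in> f ` E X Z"
    then show "q \<in> E ((\<lambda>x. x * p) ` X) ((\<lambda>x. x * p) ` Z)"
      unfolding E_def f_def by (auto simp: dilate_diff)
  qed
  moreover have "inj_on f (E X Z)"
    using assms unfolding f_def by (auto simp: inj_on_def)
  ultimately show ?thesis
    unfolding mixed_energy_def E_def[symmetric] by (simp add: card_image)
qed
lemma card_sum_incidences_le_sqrt:
  fixes X Y Z :: "'a::ab_group_add set"
  assumes "finite X" "finite Y" "finite Z"
    and "real (mixed_energy X X) \<le> M" "real (mixed_energy Z Z) \<le> M" "real (card Y) \<le> L"
  shows "real (card {(x, y). x \<in> X \<and> y \<in> Y \<and> x + y \<in> Z}) \<le> sqrt (L * M)"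
proof -
  have "real (mixed_energy X Z) ^ 2 \<le> real (mixed_energy X X) * real (mixed_energy Z Z)"
    using mixed_energy_squared_le[OF assms(1,3)] by (simp flip: of_nat_power of_nat_mult)
  also have "\<dots> \<le> M ^ 2"
    using assms(4,5) by (simp add: power2_eq_square mult_mono')
  finally have "real (mixed_energy X Z) \<le> M"
    using assms(4) by (auto intro: power2_le_imp_le)
  have "real (card {(x, y). x \<in> X \<and> y \<in> Y \<and> x + y \<in> Z}) ^ 2 \<le> real (card Y) * real (mixed_energy X Z)"
    using card_sum_incidences_squared_le[OF assms(1-3)] by (simp flip: of_nat_power of_nat_mult)
  also have "\<dots> \<le> L * M"
    using assms(6) \<open>real (mixed_energy X Z) \<le> M\<close> by (intro mult_mono) auto
  finally show ?thesis by (rule real_le_rsqrt)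
qed

lemma twisted_sumset_swap: "twisted_sumset X Y l m = twisted_sumset Y X m l"
  unfolding twisted_sumset_def by (metis (no_types, lifting) add.commute)

lemma card_twisted_inter_le_incidences:
  fixes li lj lk ll :: quat
  assumes "lk \<noteq> lj" "ll \<noteq> lj" "finite Ak" "finite Al"
  shows "card (twisted_sumset Ai Aj li lj \<inter> twisted_sumset Ak Al lk ll)
       \<le> card {(x, y). x \<in> (\<lambda>c. c * (lk - lj)) ` Ak \<and> y \<in> (\<lambda>d. d * (ll - lj)) ` Al
                      \<and> x + y \<in> (\<lambda>a. a * (li - lj)) ` Ai}"
    (is "card ?S \<le> card ?I")
proof -
  define T where "T = {(c, d). c \<in> Ak \<and> d \<in> Al \<and> c * (lk - lj) + d * (ll - lj) \<in> (\<lambda>a. a * (li - lj)) ` Ai}"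
  have fin_T: "finite T"
    by (rule finite_subset[of _ "Ak \<times> Al"]) (auto simp: T_def assms)
  have "?S \<subseteq> (\<lambda>(c, d). (c + d, c * lk + d * ll)) ` T"
  proof
    fix z assume "z \<in> ?S"
    then obtain a b c d where "a \<in> Ai" "b \<in> Aj" "c \<in> Ak" "d \<in> Al"
      and z: "z = (c + d, c * lk + d * ll)" and sum: "a + b = c + d"
      and twist: "a * li + b * lj = c * lk + d * ll"
      unfolding twisted_sumset_def by auto
    have "c * (lk - lj) + d * (ll - lj) = (c * lk + d * ll) - (c + d) * lj"
      by (simp add: algebra_simps)
    also have "\<dots> = a * (li - lj)"
      unfolding sum[symmetric] twist[symmetric] by (simp add: algebra_simps)
    finally have "(c, d) \<in> T"
      unfolding T_def using \<open>a \<in> Ai\<close> \<open>c \<in> Ak\<close> \<open>d \<in> Al\<close> by auto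
    then show "z \<in> (\<lambda>(c, d). (c + d, c * lk + d * ll)) ` T"
      unfolding z by force
  qed
  then have "card ?S \<le> card T"
    using fin_T by (meson card_image_le card_mono finite_imageI order_trans)
  also have "card T \<le> card ?I"
  proof (rule card_inj_on_le[of "\<lambda>(c, d). (c * (lk - lj), d * (ll - lj))"])
    show "inj_on (\<lambda>(c, d). (c * (lk - lj), d * (ll - lj))) T"
      using assms(1,2) by (auto simp: inj_on_def)
    show "(\<lambda>(c, d). (c * (lk - lj), d * (ll - lj))) ` T \<subseteq> ?I"
      unfolding T_def by auto
    show "finite ?I"
      by (rule finite_subset[of _ "(\<lambda>c. c * (lk - lj)) ` Ak \<times> (\<lambda>d. d * (ll - lj)) ` Al"])
         (auto simp: assms)
  qed
  finally show ?thesis .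
qed

lemma card_twisted_inter_le_sqrt:
  fixes li lj lk ll :: quat
  assumes "li \<noteq> lj" "lk \<noteq> lj" "ll \<noteq> lj" "finite Ai" "finite Ak" "finite Al"
    and "real (additive_energy Ai) \<le> M" "real (additive_energy Ak) \<le> M" "real (card Al) \<le> L"
  shows "real (card (twisted_sumset Ai Aj li lj \<inter> twisted_sumset Ak Al lk ll)) \<le> sqrt (L * M)"
proof -
  have "real (card (twisted_sumset Ai Aj li lj \<inter> twisted_sumset Ak Al lk ll))
      \<le> real (card {(x, y). x \<in> (\<lambda>c. c * (lk - lj)) ` Ak \<and> y \<in> (\<lambda>d. d * (ll - lj)) ` Al
                      \<and> x + y \<in> (\<lambda>a. a * (li - lj)) ` Ai})"
    using card_twisted_inter_le_incidences[OF assms(2,3,5,6)] by simp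
  also have "\<dots> \<le> sqrt (L * M)"
    using assms by (intro card_sum_incidences_le_sqrt)
      (simp_all add: additive_energy_eq_mixed_energy mixed_energy_mult_right card_image inj_on_def)
  finally show ?thesis .
qed

theorem lemma4p1:
  "\<exists>c::real. c > 0 \<and>
    (\<forall>(\<tau>::real) (K::real) (C::real) (li::quat) (lj::quat) (lk::quat) (ll::quat)
        (Ai::quat set) (Aj::quat set) (Ak::quat set) (Al::quat set).
       \<tau> \<ge> 1 \<and> K \<ge> 1 \<and> C \<ge> 1 \<and>
       li \<noteq> lj \<and> lk \<noteq> ll \<and> {li, lj} \<noteq> {lk, ll} \<and>
       (\<forall>X \<in> {Ai, Aj, Ak, Al}. finite X \<and> real (card X) \<le> C * \<tau> \<and>
            real (additive_energy X) \<le> C * \<tau> ^ 3 / K)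
       \<longrightarrow> real (card (twisted_sumset Ai Aj li lj \<inter> twisted_sumset Ak Al lk ll))
             \<le> c * C * \<tau> ^ 2 / sqrt K)"
proof (intro exI[of _ 1] conjI allI impI)
  fix \<tau> K C :: real and li lj lk ll :: quat and Ai Aj Ak Al :: "quat set"
  assume "\<tau> \<ge> 1 \<and> K \<ge> 1 \<and> C \<ge> 1 \<and> li \<noteq> lj \<and> lk \<noteq> ll \<and> {li, lj} \<noteq> {lk, ll} \<and>
    (\<forall>X \<in> {Ai, Aj, Ak, Al}. finite X \<and> real (card X) \<le> C * \<tau> \<and>
       real (additive_energy X) \<le> C * \<tau> ^ 3 / K)"
  then have params: "\<tau> \<ge> 1" "K \<ge> 1" "C \<ge> 1"
    and distinct: "li \<noteq> lj" "lk \<noteq> ll" "{li, lj} \<noteq> {lk, ll}"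
    and sets: "\<forall>X \<in> {Ai, Aj, Ak, Al}. finite X \<and> real (card X) \<le> C * \<tau> \<and>
       real (additive_energy X) \<le> C * \<tau> ^ 3 / K"
    by auto
  have "real (card (twisted_sumset Ai Aj li lj \<inter> twisted_sumset Ak Al lk ll))
      \<le> sqrt (C * \<tau> * (C * \<tau> ^ 3 / K))"
  proof (cases "lk \<noteq> lj \<and> ll \<noteq> lj")
    case True
    then show ?thesis
      using distinct sets by (intro card_twisted_inter_le_sqrt) auto
  next
    case False
    then have "lk \<noteq> li" "ll \<noteq> li"
      using distinct by auto
    then show ?thesis
      using distinct sets unfolding twisted_sumset_swap[of Ai]
      by (intro card_twisted_inter_le_sqrt) auto
  qed
  also have "\<dots> = sqrt ((C * \<tau> ^ 2) ^ 2 / K)"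
    by (simp add: power2_eq_square power3_eq_cube mult_ac)
  also have "\<dots> = C * \<tau> ^ 2 / sqrt K"
    using params by (simp add: real_sqrt_divide)
  finally show "real (card (twisted_sumset Ai Aj li lj \<inter> twisted_sumset Ak Al lk ll))
      \<le> 1 * C * \<tau> ^ 2 / sqrt K" by simp
qed simp

end
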